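(* Let $c_0>0$, $T>0$, and let $(\hat u,\hat v)$ be a smooth solution of the NLDE on $\mathbb{R}\times[0,T]$ with $\mathcal{M}_0,\mathcal{M}<\infty$. There exist constants $\hat C_2,\hat C_3>0$, depending only on $c_0,\mathcal{M}_0,\mathcal{M},m,\alpha,\beta$, such that for every $\tau\in(0,1)$, every time-splitting solution with mesh $\tau$ whose initial data satisfy $\sum_j(|u_j^0|^2+|v_j^0|^2)\tau\le c_0$, all $j\in\mathbb{Z}$, all integers $n\ge0$ with $(n+1)\tau\le T$, and all $s\in[0,\tau]$, $$\tilde{\mathcal{L}}_j^n(s)+\tilde{\mathcal{D}}_j^n(s)\le\hat C_2\big(\tilde{\mathcal{L}}_j^n(0)+\tilde{\mathcal{D}}_j^n(0)\big)+\hat C_3\mathcal{M}^2\tau.$$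
   Context: Fix constants $m\ge 0$ and $\alpha,\beta\in\mathbb{R}$. The NLDE for $(u,v):\mathbb{R}\times[0,T]\to\mathbb{C}^2$ is $u_t+u_x=imv+i\alpha u|v|^2+2i\beta(\bar u v+u\bar v)v$, $v_t-v_x=imu+i\alpha v|u|^2+2i\beta(\bar u v+u\bar v)u$. Let (N) denote the ODE system on $\mathbb{C}^2$: $\frac{du}{ds}=imv+i\alpha u|v|^2+2i\beta(\bar u v+u\bar v)v$, $\frac{dv}{ds}=imu+i\alpha v|u|^2+2i\beta(\bar u v+u\bar v)u$. Time-splitting scheme with mesh $\tau>0$: given $(u_j^0,v_j^0)_{j\in\mathbb{Z}}\subset\mathbb{C}^2$ with $\sum_j(|u_j^0|^2+|v_j^0|^2)<\infty$, set $(u^{(\tau)},v^{(\tau)})(x,0)=(u_j^0,v_j^0)$ for $x\in[j\tau,(j+1)\tau)$. Inductively, once $(u^{(\tau)},v^{(\tau)})(\cdot,n\tau)$ is defined, set for $t\in[n\tau,(n+1)\tau)$: $u^{(\tau)}(x,t)=u^{(\tau)}(x-(t-n\tau),n\tau)$, $v^{(\tau)}(x,t)=v^{(\tau)}(x+(t-n\tau),n\tau)$; let $(u^{(\tau)},v^{(\tau)})(x,(n+1)\tau-)$ be the left limit in $t$; and for each $x$ define $(u^{(\tau)},v^{(\tau)})(x,(n+1)\tau)$ as the value at $s=\tau$ of the solution of (N) with value $(u^{(\tau)},v^{(\tau)})(x,(n+1)\tau-)$ at $s=0$ (this is globally well defined). Notation: $(u_j^n,v_j^n)=(u^{(\tau)},v^{(\tau)})(j\tau,n\tau)$,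 $(u_j^{n+1-},v_j^{n+1-})=(u^{(\tau)},v^{(\tau)})(j\tau,(n+1)\tau-)$; $(u_j^{n,2}(s),v_j^{n,2}(s))$, $s\in[0,\tau]$, is the solution of (N) with initial value $(u_j^{n+1-},v_j^{n+1-})$. Comparison quantities: $\mathcal{M}_0=\max_{\mathbb{R}\times[0,T]}(|\hat u|+|\hat v|+1)$, $\mathcal{M}=\max_{\mathbb{R}\times[0,T]}(|\hat u_t|+|\hat u_x|+|\hat v_t|+|\hat v_x|+1)$. For $s\in[0,\tau]$: $\mathcal{U}_j^n(s)=\hat u(j\tau+s,n\tau+s)-u_{j+1}^{n,2}(s)$, $\mathcal{V}_{j+2}^n(s)=\hat v((j+2)\tau-s,n\tau+s)-v_{j+1}^{n,2}(s)$, $\tilde{\mathcal{L}}_j^n(s)=|\mathcal{U}_j^n(s)|^2+|\mathcal{V}_{j+2}^n(s)|^2$, $\tilde{\mathcal{D}}_j^n(s)=|\mathcal{U}_j^n(s)|^2|v_{j+1}^{n,2}(s)|^2+|\mathcal{V}_{j+2}^n(s)|^2|u_{j+1}^{n,2}(s)|^2$. *)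

theory Defs
  imports "HOL-Analysis.Analysis"
begin

text \<open>Points of the (x,t)-plane are pairs (x,t). Partial derivatives of a function
  on a set S, taken as the Frechet derivative within S applied to the unit directions.\<close>

definition pdx :: "(real \<times> real \<Rightarrow> complex) \<Rightarrow> (real \<times> real) set \<Rightarrow> real \<times> real \<Rightarrow> complex" where
  "pdx f S p = frechet_derivative f (at p within S) (1, 0)"

definition pdt :: "(real \<times> real \<Rightarrow> complex) \<Rightarrow> (real \<times> real) set \<Rightarrow> real \<times> real \<Rightarrow> complex" where
  "pdt f S p = frechet_derivative f (at p within S) (0, 1)"

coinductive smooth_on_set :: "(real \<times> real) set \<Rightarrow> (real \<times> real \<Rightarrow> complex) \<Rightarrow> bool" where
  "\<lbrakk> \<forall>p\<in>S. f differentiable (at p within S);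
     smooth_on_set S (pdx f S); smooth_on_set S (pdt f S) \<rbrakk> \<Longrightarrow> smooth_on_set S f"

definition NF1 :: "real \<Rightarrow> real \<Rightarrow> real \<Rightarrow> complex \<Rightarrow> complex \<Rightarrow> complex" where
  "NF1 m \<alpha> \<beta> u v = \<i> * of_real m * v + \<i> * of_real \<alpha> * u * of_real ((cmod v)\<^sup>2)
      + 2 * \<i> * of_real \<beta> * (cnj u * v + u * cnj v) * v"

definition NF2 :: "real \<Rightarrow> real \<Rightarrow> real \<Rightarrow> complex \<Rightarrow> complex \<Rightarrow> complex" where
  "NF2 m \<alpha> \<beta> u v = \<i> * of_real m * u + \<i> * of_real \<alpha> * v * of_real ((cmod u)\<^sup>2)
      + 2 * \<i> * of_real \<beta> * (cnj u * v + u * cnj v) * u"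

definition NF :: "real \<Rightarrow> real \<Rightarrow> real \<Rightarrow> complex \<times> complex \<Rightarrow> complex \<times> complex" where
  "NF m \<alpha> \<beta> w = (NF1 m \<alpha> \<beta> (fst w) (snd w), NF2 m \<alpha> \<beta> (fst w) (snd w))"

definition NLDE_smooth_solution ::
  "real \<Rightarrow> real \<Rightarrow> real \<Rightarrow> real \<Rightarrow> (real \<times> real \<Rightarrow> complex) \<Rightarrow> (real \<times> real \<Rightarrow> complex) \<Rightarrow> bool" where
  "NLDE_smooth_solution m \<alpha> \<beta> T uh vh \<longleftrightarrow>
     (let S = (UNIV :: real set) \<times> {0..T} in
       smooth_on_set S uh \<and> smooth_on_set S vh \<and>
       (\<forall>p\<in>S. pdt uh S p + pdx uh S p = NF1 m \<alpha> \<beta> (uh p) (vh p)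
             \<and> pdt vh S p - pdx vh S p = NF2 m \<alpha> \<beta> (uh p) (vh p)))"

definition N_solution :: "real \<Rightarrow> real \<Rightarrow> real \<Rightarrow> real \<Rightarrow> complex \<times> complex \<Rightarrow> (real \<Rightarrow> complex \<times> complex) \<Rightarrow> bool" where
  "N_solution m \<alpha> \<beta> \<tau> w0 w \<longleftrightarrow> w 0 = w0 \<and>
     (\<forall>s\<in>{0..\<tau>}. (w has_vector_derivative NF m \<alpha> \<beta> (w s)) (at s within {0..\<tau>}))"

text \<open>Grid values of the time-splitting scheme with mesh tau:
  U j n = u_j^n, V j n = v_j^n, and W j n s = (u_j^{n,2}(s), v_j^{n,2}(s)).
  Transport over one time step shifts the cell-wise constant data by exactly one cell, so
  (u_j^{n+1-}, v_j^{n+1-}) = (u_{j-1}^n, v_{j+1}^n).\<close>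

definition splitting_scheme ::
  "real \<Rightarrow> real \<Rightarrow> real \<Rightarrow> real \<Rightarrow> (int \<Rightarrow> nat \<Rightarrow> complex) \<Rightarrow> (int \<Rightarrow> nat \<Rightarrow> complex)
     \<Rightarrow> (int \<Rightarrow> nat \<Rightarrow> real \<Rightarrow> complex \<times> complex) \<Rightarrow> bool" where
  "splitting_scheme m \<alpha> \<beta> \<tau> U V W \<longleftrightarrow>
     (\<forall>j n. N_solution m \<alpha> \<beta> \<tau> (U (j - 1) n, V (j + 1) n) (W j n)
        \<and> U j (Suc n) = fst (W j n \<tau>) \<and> V j (Suc n) = snd (W j n \<tau>))"

end

theory Submission
  imports Defs
begin

text \<open>
  Along the two characteristics through a cell (with slopes \<open>+1\<close> for \<open>u\<close> and \<open>-1\<close> for \<open>v\<close>) the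
  exact solution satisfies the ODE (N), except that each equation sees the other component on the
  wrong characteristic; the two characteristics are at most \<open>2\<tau>\<close> apart, so this mismatch is at
  most \<open>2M\<tau>\<close>. Comparing with the numerical solution of (N), the error energy \<open>E = L + D\<close> obeys
  \<open>E' \<le> (8KG\<^sup>2 + 1/\<tau>) E + 4\<tau>K\<^sup>2G\<^sup>6(2M\<tau>)\<^sup>2\<close>, where \<open>K\<close> depends only on \<open>m, \<alpha>, \<beta>\<close> and
  \<open>G\<close> bounds the exact solution (by \<open>M\<^sub>0\<close>) as well as the numerical one. The latter bound
  comes from conservation of mass: (N) conserves \<open>|u|\<^sup>2 + |v|\<^sup>2\<close> and the transport step only
  shifts cells, so on every cell \<open>|u|\<^sup>2 + |v|\<^sup>2 \<le> c\<^sub>0/\<tau>\<close>.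
  Hence \<open>G\<^sup>2\<tau> \<le> 2(M\<^sub>0\<^sup>2 + c\<^sub>0)\<close>, and Gronwall's inequality over one time step of length \<open>\<tau>\<close> yields
  a factor \<open>exp (16K(M\<^sub>0\<^sup>2 + c\<^sub>0) + 1)\<close> that does not depend on \<open>\<tau>\<close>.
\<close>

section \<open>Estimates for the nonlinearity\<close>

lemma NF2_swap: "NF2 m \<alpha> \<beta> u v = NF1 m \<alpha> \<beta> v u"
  unfolding NF1_def NF2_def by (simp add: algebra_simps)

lemma Re_cnj_mult_NF_eq_0: "Re (cnj u * NF1 m \<alpha> \<beta> u v + cnj v * NF2 m \<alpha> \<beta> u v) = 0"
  unfolding NF1_def NF2_def by (simp add: cmod_power2 algebra_simps)

lemma NF1_diff_eq:
  "NF1 m \<alpha> \<beta> p q - NF1 m \<alpha> \<beta> u v = \<i> * of_real m * (q - v)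
     + \<i> * of_real \<alpha> * (p * q * cnj q - u * v * cnj v)
     + 2 * \<i> * of_real \<beta> * ((cnj p * q * q - cnj u * v * v) + (p * cnj q * q - u * cnj v * v))"
  unfolding NF1_def complex_norm_square by (simp add: algebra_simps)

lemma norm_triple_product_diff_le:
  fixes p1 p2 p3 u1 u2 u3 :: "'a::real_normed_field"
  shows "norm (p1 * p2 * p3 - u1 * u2 * u3)
    \<le> norm (p1 - u1) * norm p2 * norm p3 + norm u1 * norm (p2 - u2) * norm p3
       + norm u1 * norm u2 * norm (p3 - u3)"
proof -
  have "p1 * p2 * p3 - u1 * u2 * u3 = (p1 - u1) * p2 * p3 + u1 * (p2 - u2) * p3 + u1 * u2 * (p3 - u3)"
    by (simp add: algebra_simps)
  then show ?thesis
    by (metis norm_mult norm_triangle_le add_mono order_refl)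
qed

lemma norm_NF1_diff_le:
  assumes "0 \<le> m" and "cmod p \<le> G" and "cmod q \<le> G"
  shows "cmod (NF1 m \<alpha> \<beta> p q - NF1 m \<alpha> \<beta> u v) \<le> m * cmod (q - v)
    + (\<bar>\<alpha>\<bar> + 4 * \<bar>\<beta>\<bar>) * (cmod (p - u) * G\<^sup>2 + cmod u * cmod (q - v) * G + cmod u * cmod v * cmod (q - v))"
proof -
  define \<Phi> where "\<Phi> = cmod (p - u) * G\<^sup>2 + cmod u * cmod (q - v) * G + cmod u * cmod v * cmod (q - v)"
  have cubic: "cmod (x1 * x2 * x3 - y1 * y2 * y3) \<le> \<Phi>"
    if "cmod (x1 - y1) = cmod (p - u)" "cmod x2 \<le> G" "cmod x3 \<le> G" "cmod y1 = cmod u"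
      "cmod (x2 - y2) = cmod (q - v)" "cmod y2 = cmod v" "cmod (x3 - y3) = cmod (q - v)"
    for x1 x2 x3 y1 y2 y3
  proof -
    have "cmod (x1 - y1) * cmod x2 * cmod x3 \<le> cmod (p - u) * G\<^sup>2"
      using that unfolding power2_eq_square mult.assoc
      by (intro mult_left_mono mult_mono) (auto intro: order_trans[OF norm_ge_zero])
    moreover have "cmod y1 * cmod (x2 - y2) * cmod x3 \<le> cmod u * cmod (q - v) * G"
      using that by (simp add: mult_left_mono)
    moreover have "cmod y1 * cmod y2 * cmod (x3 - y3) = cmod u * cmod v * cmod (q - v)"
      using that by simp
    ultimately show ?thesis
      using norm_triple_product_diff_le[of x1 x2 x3 y1 y2 y3] unfolding \<Phi>_def by linarith
  qed
  have "cmod (p * q * cnj q - u * v * cnj v) \<le> \<Phi>"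
    and "cmod (cnj p * q * q - cnj u * v * v) \<le> \<Phi>"
    and "cmod (p * cnj q * q - u * cnj v * v) \<le> \<Phi>"
    using assms by (auto intro!: cubic simp flip: complex_cnj_diff)
  then have "\<bar>\<alpha>\<bar> * cmod (p * q * cnj q - u * v * cnj v) \<le> \<bar>\<alpha>\<bar> * \<Phi>"
    and "2 * \<bar>\<beta>\<bar> * cmod ((cnj p * q * q - cnj u * v * v) + (p * cnj q * q - u * cnj v * v))
      \<le> 2 * \<bar>\<beta>\<bar> * (\<Phi> + \<Phi>)"
    by (intro mult_left_mono norm_triangle_le add_mono; simp)+
  moreover have "cmod (NF1 m \<alpha> \<beta> p q - NF1 m \<alpha> \<beta> u v) \<le> m * cmod (q - v)
      + \<bar>\<alpha>\<bar> * cmod (p * q * cnj q - u * v * cnj v)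
      + 2 * \<bar>\<beta>\<bar> * cmod ((cnj p * q * q - cnj u * v * v) + (p * cnj q * q - u * cnj v * v))"
    unfolding NF1_diff_eq using assms(1) by (intro norm_triangle_le add_mono) (simp_all add: norm_mult)
  ultimately show ?thesis unfolding \<Phi>_def by (simp add: algebra_simps)
qed

lemma cubic_error_weight_le:
  fixes a b e \<delta> x y G :: real
  assumes "1 \<le> G" "0 \<le> a" "0 \<le> b" "0 \<le> \<delta>" "0 \<le> x" "0 \<le> y" "x \<le> G" "y \<le> G" "e \<le> b + \<delta>"
  defines "W \<equiv> G\<^sup>2 * (a + b + a * y + b * x) + G ^ 3 * \<delta>"
  shows "e \<le> W" "e * y \<le> W"
    and "a * G\<^sup>2 + x * e * G + x * y * e \<le> 2 * W" (is "?\<Phi> \<le> _")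
    and "(a * G\<^sup>2 + x * e * G + x * y * e) * y \<le> 2 * W"
proof -
  have "1 * 1 \<le> G * G" "1 * G \<le> G * G" "1 * (G * G) \<le> G * (G * G)"
    using assms(1) by (intro mult_mono; simp)+
  then have G: "1 \<le> G\<^sup>2" "G \<le> G\<^sup>2" "G\<^sup>2 \<le> G ^ 3"
    by (simp_all add: power2_eq_square power3_eq_cube)
  have "x * (G + y) \<le> G * (2 * G)" "y * (G + y) \<le> G * (2 * G)" "x * y * (G + y) \<le> (G * G) * (2 * G)"
    using assms(1,5-8) by (intro mult_mono; simp)+
  then have xy: "x * (G + y) \<le> 2 * G\<^sup>2" "y * (G + y) \<le> 2 * G\<^sup>2" "x * y * (G + y) \<le> 2 * G ^ 3"
    by (simp_all add: power2_eq_square power3_eq_cube)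
  have e: "e \<le> b + \<delta>" "e * y \<le> (b + \<delta>) * y" "x * e * G \<le> x * (b + \<delta>) * G"
    "x * y * e \<le> x * y * (b + \<delta>)"
    using assms by (simp_all add: mult_left_mono mult_right_mono)
  have c: "1 \<le> G\<^sup>2" "1 \<le> G ^ 3" "y \<le> G\<^sup>2" "y \<le> G ^ 3"
    using G assms(8) by linarith+
  have "b + \<delta> \<le> G\<^sup>2 * b + G ^ 3 * \<delta>"
    using mult_right_mono[OF c(1) assms(3)] mult_right_mono[OF c(2) assms(4)] by simp
  moreover have "(b + \<delta>) * y \<le> G\<^sup>2 * b + G ^ 3 * \<delta>"
    using mult_right_mono[OF c(3) assms(3)] mult_right_mono[OF c(4) assms(4)] by (simp add: algebra_simps)
  moreover have "0 \<le> G\<^sup>2 * (a + a * y + b * x)"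
    using assms(2-6) by simp
  ultimately show "e \<le> W" "e * y \<le> W"
    using e unfolding W_def by (simp_all add: algebra_simps)
  have W: "0 \<le> G\<^sup>2 * a" "0 \<le> G\<^sup>2 * (a * y)" "0 \<le> G\<^sup>2 * b" "0 \<le> G\<^sup>2 * (b * x)"
    "0 \<le> G ^ 3 * \<delta>"
    using assms(1-6) by simp_all
  have Gy: "G + y \<le> 2 * G\<^sup>2" "2 * G\<^sup>2 \<le> 2 * G ^ 3"
    using G assms(8) by linarith+
  have "?\<Phi> \<le> G\<^sup>2 * a + (b * x) * (G + y) + \<delta> * (x * (G + y))"
    using e(3,4) by (simp add: algebra_simps)
  also have "\<dots> \<le> G\<^sup>2 * a + (b * x) * (2 * G\<^sup>2) + \<delta> * (2 * G ^ 3)"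
    using Gy xy(1) assms(3-5) by (intro add_mono mult_left_mono order_refl) auto
  also have "\<dots> \<le> 2 * W"
    using W unfolding W_def by (simp add: algebra_simps)
  finally show "?\<Phi> \<le> 2 * W" .
  have "?\<Phi> * y \<le> G\<^sup>2 * (a * y) + (b * x) * (y * (G + y)) + \<delta> * (x * y * (G + y))"
    using mult_right_mono[OF e(3) assms(6)] mult_right_mono[OF e(4) assms(6)]
    by (simp add: algebra_simps)
  also have "\<dots> \<le> G\<^sup>2 * (a * y) + (b * x) * (2 * G\<^sup>2) + \<delta> * (2 * G ^ 3)"
    using xy(2,3) assms(3-5) by (intro add_mono mult_left_mono order_refl) auto
  also have "\<dots> \<le> 2 * W"
    using W unfolding W_def by (simp add: algebra_simps)
  finally show "?\<Phi> * y \<le> 2 * W" .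
qed

lemma norm_NF2_le:
  assumes "0 \<le> m"
  shows "cmod (NF2 m \<alpha> \<beta> u v) \<le> m * cmod u + (\<bar>\<alpha>\<bar> + 4 * \<bar>\<beta>\<bar>) * ((cmod u)\<^sup>2 * cmod v)"
proof -
  define z where "z = cnj u * v + u * cnj v"
  have "cmod z \<le> 2 * (cmod u * cmod v)"
    using norm_triangle_ineq[of "cnj u * v" "u * cnj v"] unfolding z_def by (simp add: norm_mult)
  then have "2 * \<bar>\<beta>\<bar> * cmod z * cmod u \<le> 2 * \<bar>\<beta>\<bar> * (2 * (cmod u * cmod v)) * cmod u"
    by (intro mult_left_mono mult_right_mono) auto
  then have "cmod (2 * \<i> * of_real \<beta> * z * u) \<le> 4 * \<bar>\<beta>\<bar> * ((cmod u)\<^sup>2 * cmod v)"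
    by (simp add: norm_mult power2_eq_square algebra_simps)
  moreover have "cmod (\<i> * of_real \<alpha> * v * of_real ((cmod u)\<^sup>2)) = \<bar>\<alpha>\<bar> * ((cmod u)\<^sup>2 * cmod v)"
    by (simp add: norm_mult norm_power)
  moreover have "cmod (\<i> * of_real m * u) = m * cmod u"
    using assms by (simp add: norm_mult)
  moreover have "cmod (NF2 m \<alpha> \<beta> u v) \<le> cmod (\<i> * of_real m * u)
      + cmod (\<i> * of_real \<alpha> * v * of_real ((cmod u)\<^sup>2)) + cmod (2 * \<i> * of_real \<beta> * z * u)"
    unfolding NF2_def z_def by (meson norm_triangle_ineq order_trans add_right_mono)
  ultimately show ?thesis
    by (simp add: algebra_simps)
qed

lemma norm_mult_NF2_le:
  assumes "0 \<le> m" "1 \<le> G" "cmod u \<le> G"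
  shows "cmod (a * NF2 m \<alpha> \<beta> u v) \<le> (m + \<bar>\<alpha>\<bar> + 4 * \<bar>\<beta>\<bar>) * (G\<^sup>2 * (cmod a + cmod a * cmod v))"
proof -
  have "cmod u \<le> G\<^sup>2" "(cmod u)\<^sup>2 \<le> G\<^sup>2"
    using assms(2,3) power_mono[OF assms(3) norm_ge_zero, of 2]
    by (auto simp: power2_eq_square intro: order_trans[OF _ mult_right_mono[of 1 G G]])
  have "cmod (NF2 m \<alpha> \<beta> u v) \<le> m * cmod u + (\<bar>\<alpha>\<bar> + 4 * \<bar>\<beta>\<bar>) * ((cmod u)\<^sup>2 * cmod v)"
    by (rule norm_NF2_le[OF assms(1)])
  also have "\<dots> \<le> m * G\<^sup>2 + (\<bar>\<alpha>\<bar> + 4 * \<bar>\<beta>\<bar>) * (G\<^sup>2 * cmod v)"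
    using assms(1) \<open>cmod u \<le> G\<^sup>2\<close> \<open>(cmod u)\<^sup>2 \<le> G\<^sup>2\<close>
    by (intro add_mono mult_left_mono mult_right_mono) auto
  also have "\<dots> \<le> (m + \<bar>\<alpha>\<bar> + 4 * \<bar>\<beta>\<bar>) * (G\<^sup>2 * (1 + cmod v))"
    using assms(1) by (simp add: algebra_simps)
  finally have "cmod a * cmod (NF2 m \<alpha> \<beta> u v) \<le> cmod a * ((m + \<bar>\<alpha>\<bar> + 4 * \<bar>\<beta>\<bar>) * (G\<^sup>2 * (1 + cmod v)))"
    by (rule mult_left_mono) simp
  then show ?thesis
    by (simp add: norm_mult algebra_simps)
qed

lemma norm_NF1_diff_le_weight:
  fixes m \<alpha> \<beta> b \<delta> G K :: real
  assumes "0 \<le> m" "1 \<le> G" "cmod p \<le> G" "cmod q \<le> G" "cmod u \<le> G" "cmod v \<le> G"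
    and "cmod (q - v) \<le> b + \<delta>" "0 \<le> b" "0 \<le> \<delta>" "2 * (m + 2 * \<bar>\<alpha>\<bar> + 8 * \<bar>\<beta>\<bar>) \<le> K"
  defines "W \<equiv> G\<^sup>2 * (cmod (p - u) + b + cmod (p - u) * cmod v + b * cmod u) + G ^ 3 * \<delta>"
  shows "cmod (NF1 m \<alpha> \<beta> p q - NF1 m \<alpha> \<beta> u v) \<le> K * W"
    and "cmod ((p - u) * NF2 m \<alpha> \<beta> u v + (NF1 m \<alpha> \<beta> p q - NF1 m \<alpha> \<beta> u v) * v) \<le> K * W"
proof -
  define c where "c = \<bar>\<alpha>\<bar> + 4 * \<bar>\<beta>\<bar>"
  define \<Phi> where "\<Phi> = cmod (p - u) * G\<^sup>2 + cmod u * cmod (q - v) * G + cmod u * cmod v * cmod (q - v)"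
  note weight = cubic_error_weight_le[OF assms(2) norm_ge_zero[of "p - u"] assms(8,9)
      norm_ge_zero norm_ge_zero assms(5-7), folded W_def \<Phi>_def]
  have "0 \<le> G ^ 3 * \<delta>" "0 \<le> G\<^sup>2 * b" "0 \<le> G\<^sup>2 * (b * cmod u)"
    using assms(2,8,9) by simp_all
  then have W: "0 \<le> W" "G\<^sup>2 * (cmod (p - u) + cmod (p - u) * cmod v) \<le> W"
    using order_trans[OF norm_ge_zero weight(1)] unfolding W_def by (simp_all add: algebra_simps)
  have c: "0 \<le> c" "2 * (m + 2 * c) \<le> K"
    using assms(10) unfolding c_def by simp_all
  have diff: "cmod (NF1 m \<alpha> \<beta> p q - NF1 m \<alpha> \<beta> u v) \<le> m * cmod (q - v) + c * \<Phi>"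
    using norm_NF1_diff_le[OF assms(1,3,4)] unfolding c_def \<Phi>_def .
  also have "\<dots> \<le> m * W + c * (2 * W)"
    using weight(1,3) assms(1) c(1) by (intro add_mono mult_left_mono)
  finally have diff_le: "cmod (NF1 m \<alpha> \<beta> p q - NF1 m \<alpha> \<beta> u v) \<le> (m + 2 * c) * W"
    by (simp add: algebra_simps)
  have "2 * ((m + 2 * c) * W) \<le> K * W"
    using mult_right_mono[OF c(2) W(1)] by (simp only: mult.assoc)
  moreover have "0 \<le> (m + 2 * c) * W"
    using assms(1) c(1) W(1) by simp
  ultimately have K: "(m + 2 * c) * W \<le> K * W" "2 * ((m + 2 * c) * W) \<le> K * W"
    by linarith+
  with diff_le show "cmod (NF1 m \<alpha> \<beta> p q - NF1 m \<alpha> \<beta> u v) \<le> K * W"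
    by linarith
  have "cmod ((NF1 m \<alpha> \<beta> p q - NF1 m \<alpha> \<beta> u v) * v) \<le> (m * cmod (q - v) + c * \<Phi>) * cmod v"
    unfolding norm_mult using diff by (simp add: mult_right_mono)
  also have "\<dots> = m * (cmod (q - v) * cmod v) + c * (\<Phi> * cmod v)"
    by (simp add: algebra_simps)
  also have "\<dots> \<le> m * W + c * (2 * W)"
    using weight(2,4) assms(1) c(1) by (intro add_mono mult_left_mono)
  finally have "cmod ((NF1 m \<alpha> \<beta> p q - NF1 m \<alpha> \<beta> u v) * v) \<le> (m + 2 * c) * W"
    by (simp add: algebra_simps)
  moreover have "cmod ((p - u) * NF2 m \<alpha> \<beta> u v) \<le> (m + 2 * c) * W"
  proof -
    have "cmod ((p - u) * NF2 m \<alpha> \<beta> u v) \<le> (m + c) * (G\<^sup>2 * (cmod (p - u) + cmod (p - u) * cmod v))"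
      using norm_mult_NF2_le[OF assms(1,2,5), of "p - u" \<alpha> \<beta> v] unfolding c_def by (simp add: add.assoc)
    also have "\<dots> \<le> (m + 2 * c) * W"
      using W c(1) assms(1) by (intro mult_mono) auto
    finally show ?thesis .
  qed
  ultimately show "cmod ((p - u) * NF2 m \<alpha> \<beta> u v + (NF1 m \<alpha> \<beta> p q - NF1 m \<alpha> \<beta> u v) * v) \<le> K * W"
    using norm_triangle_ineq[of "(p - u) * NF2 m \<alpha> \<beta> u v" "(NF1 m \<alpha> \<beta> p q - NF1 m \<alpha> \<beta> u v) * v"]
      K(2) by linarith
qed

section \<open>Conservation of mass\<close>

lemma has_real_derivative_cmod_power2:
  assumes "(z has_vector_derivative z') (at x within S)"
  shows "((\<lambda>s. (cmod (z s))\<^sup>2) has_real_derivative 2 * Re (cnj (z x) * z')) (at x within S)"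
proof -
  have "((\<lambda>s. (Re (z s))\<^sup>2 + (Im (z s))\<^sup>2) has_real_derivative
      2 * Re (z x) * Re z' + 2 * Im (z x) * Im z') (at x within S)"
    using assms by (auto intro!: derivative_eq_intros)
  then show ?thesis
    by (simp add: cmod_power2 algebra_simps)
qed

lemma N_solution_components:
  assumes "N_solution m \<alpha> \<beta> \<tau> w0 w" "t \<in> {0..\<tau>}"
  shows "((\<lambda>s. fst (w s)) has_vector_derivative NF1 m \<alpha> \<beta> (fst (w t)) (snd (w t))) (at t within {0..\<tau>})"
    and "((\<lambda>s. snd (w s)) has_vector_derivative NF2 m \<alpha> \<beta> (fst (w t)) (snd (w t))) (at t within {0..\<tau>})"
  using assms bounded_linear.has_vector_derivative[OF bounded_linear_fst]
    bounded_linear.has_vector_derivative[OF bounded_linear_snd]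
  unfolding N_solution_def NF_def by fastforce+

lemma N_solution_mass_eq:
  assumes "N_solution m \<alpha> \<beta> \<tau> w0 w" "s \<in> {0..\<tau>}"
  shows "(cmod (fst (w s)))\<^sup>2 + (cmod (snd (w s)))\<^sup>2 = (cmod (fst w0))\<^sup>2 + (cmod (snd w0))\<^sup>2"
proof -
  have "((\<lambda>t. (cmod (fst (w t)))\<^sup>2 + (cmod (snd (w t)))\<^sup>2) has_real_derivative 0) (at t within {0..\<tau>})"
    if "t \<in> {0..\<tau>}" for t
  proof (rule DERIV_cong)
    show "((\<lambda>t. (cmod (fst (w t)))\<^sup>2 + (cmod (snd (w t)))\<^sup>2) has_real_derivative
        2 * Re (cnj (fst (w t)) * NF1 m \<alpha> \<beta> (fst (w t)) (snd (w t)))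
        + 2 * Re (cnj (snd (w t)) * NF2 m \<alpha> \<beta> (fst (w t)) (snd (w t)))) (at t within {0..\<tau>})"
      using N_solution_components[OF assms(1) that]
      by (intro DERIV_add has_real_derivative_cmod_power2)
    show "2 * Re (cnj (fst (w t)) * NF1 m \<alpha> \<beta> (fst (w t)) (snd (w t)))
        + 2 * Re (cnj (snd (w t)) * NF2 m \<alpha> \<beta> (fst (w t)) (snd (w t))) = 0"
      using Re_cnj_mult_NF_eq_0[of "fst (w t)" m \<alpha> \<beta> "snd (w t)"] by simp
  qed
  then obtain c where "\<forall>t\<in>{0..\<tau>}. (cmod (fst (w t)))\<^sup>2 + (cmod (snd (w t)))\<^sup>2 = c"
    using has_field_derivative_zero_constant[of "{0..\<tau>}"] by blast
  moreover have "w 0 = w0"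
    using assms(1) unfolding N_solution_def by simp
  ultimately show ?thesis
    using assms(2) by force
qed

lemma splitting_scheme_mass_eq:
  fixes U V :: "int \<Rightarrow> nat \<Rightarrow> complex"
  assumes "splitting_scheme m \<alpha> \<beta> \<tau> U V W" "0 \<le> \<tau>"
    and "(\<lambda>j. (cmod (U j 0))\<^sup>2 + (cmod (V j 0))\<^sup>2) summable_on UNIV"
  shows "(\<lambda>j. (cmod (U j n))\<^sup>2 + (cmod (V j n))\<^sup>2) summable_on UNIV \<and>
    (\<Sum>\<^sub>\<infinity>j. (cmod (U j n))\<^sup>2 + (cmod (V j n))\<^sup>2) = (\<Sum>\<^sub>\<infinity>j. (cmod (U j 0))\<^sup>2 + (cmod (V j 0))\<^sup>2)"
proof (induction n)
  case 0
  then show ?case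
    using assms(3) by simp
next
  case (Suc n)
  define f where "f j = (cmod (U j n))\<^sup>2" for j
  define g where "g j = (cmod (V j n))\<^sup>2" for j
  have fg: "(\<lambda>j. f j + g j) summable_on UNIV"
    using Suc.IH unfolding f_def g_def by simp
  have f: "f summable_on UNIV" and g: "g summable_on UNIV"
    using fg by (auto intro: summable_on_comparison_test simp: f_def g_def)
  have step: "(cmod (U j (Suc n)))\<^sup>2 + (cmod (V j (Suc n)))\<^sup>2 = f (j - 1) + g (j + 1)" for j
    using N_solution_mass_eq[of m \<alpha> \<beta> \<tau> "(U (j - 1) n, V (j + 1) n)" "W j n" \<tau>] assms(1,2)
    unfolding splitting_scheme_def f_def g_def by auto
  have shift: "bij_betw (\<lambda>j::int. j + k) UNIV UNIV" for k
    by (rule bij_betwI[where g="\<lambda>j. j - k"]) auto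
  have f': "(\<lambda>j. f (j - 1)) summable_on UNIV" and g': "(\<lambda>j. g (j + 1)) summable_on UNIV"
    using summable_on_reindex_bij_betw[OF shift[of "-1"], of f]
      summable_on_reindex_bij_betw[OF shift[of 1], of g] f g by simp_all
  have "(\<Sum>\<^sub>\<infinity>j. f (j - 1) + g (j + 1)) = (\<Sum>\<^sub>\<infinity>j. f j) + (\<Sum>\<^sub>\<infinity>j. g j)"
    using infsum_add[OF f' g'] infsum_reindex_bij_betw[OF shift[of "-1"], of f]
      infsum_reindex_bij_betw[OF shift[of 1], of g] by simp
  also have "\<dots> = (\<Sum>\<^sub>\<infinity>j. f j + g j)"
    using infsum_add[OF f g] by simp
  finally show ?case
    using Suc.IH summable_on_add[OF f' g'] unfolding step f_def g_def by simp
qed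

lemma splitting_scheme_cell_mass_le:
  fixes U V :: "int \<Rightarrow> nat \<Rightarrow> complex"
  assumes "splitting_scheme m \<alpha> \<beta> \<tau> U V W" "0 \<le> \<tau>"
    and "(\<lambda>j. (cmod (U j 0))\<^sup>2 + (cmod (V j 0))\<^sup>2) summable_on UNIV"
  shows "(cmod (U j n))\<^sup>2 + (cmod (V (j + 2) n))\<^sup>2 \<le> (\<Sum>\<^sub>\<infinity>j. (cmod (U j 0))\<^sup>2 + (cmod (V j 0))\<^sup>2)"
proof -
  have "N_solution m \<alpha> \<beta> \<tau> (U j n, V (j + 2) n) (W (j + 1) n)"
    using assms(1) unfolding splitting_scheme_def by (metis add_diff_cancel_right' add.assoc one_add_one)
  then have "(cmod (U j n))\<^sup>2 + (cmod (V (j + 2) n))\<^sup>2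
      = (cmod (U (j + 1) (Suc n)))\<^sup>2 + (cmod (V (j + 1) (Suc n)))\<^sup>2"
    using N_solution_mass_eq[of m \<alpha> \<beta> \<tau> "(U j n, V (j + 2) n)" "W (j + 1) n" \<tau>] assms(1,2)
    unfolding splitting_scheme_def by simp
  also have "\<dots> \<le> (\<Sum>\<^sub>\<infinity>j. (cmod (U j (Suc n)))\<^sup>2 + (cmod (V j (Suc n)))\<^sup>2)"
    using splitting_scheme_mass_eq[OF assms, of "Suc n"]
      finite_sum_le_infsum[of "\<lambda>j. (cmod (U j (Suc n)))\<^sup>2 + (cmod (V j (Suc n)))\<^sup>2" UNIV "{j + 1}"]
    by simp
  also have "\<dots> = (\<Sum>\<^sub>\<infinity>j. (cmod (U j 0))\<^sup>2 + (cmod (V j 0))\<^sup>2)"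
    using splitting_scheme_mass_eq[OF assms, of "Suc n"] by simp
  finally show ?thesis .
qed

section \<open>Gronwall estimate for the error energy\<close>

lemma power2_sum4_le: "((a::real) + b + c + d)\<^sup>2 \<le> 4 * (a\<^sup>2 + b\<^sup>2 + c\<^sup>2 + d\<^sup>2)"
proof -
  have "4 * (a\<^sup>2 + b\<^sup>2 + c\<^sup>2 + d\<^sup>2) - (a + b + c + d)\<^sup>2
      = (a - b)\<^sup>2 + (a - c)\<^sup>2 + (a - d)\<^sup>2 + (b - c)\<^sup>2 + (b - d)\<^sup>2 + (c - d)\<^sup>2"
    by (simp add: power2_eq_square algebra_simps)
  moreover have "0 \<le> (a - b)\<^sup>2 + (a - c)\<^sup>2 + (a - d)\<^sup>2 + (b - c)\<^sup>2 + (b - d)\<^sup>2 + (c - d)\<^sup>2"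
    by simp
  ultimately show ?thesis
    by linarith
qed

lemma two_mult_le_weighted_squares:
  fixes x y \<epsilon> :: real
  assumes "0 < \<epsilon>"
  shows "2 * x * y \<le> x\<^sup>2 / \<epsilon> + \<epsilon> * y\<^sup>2"
proof -
  have "0 \<le> (x - \<epsilon> * y)\<^sup>2 / \<epsilon>"
    using assms by simp
  also have "\<dots> = x\<^sup>2 / \<epsilon> + \<epsilon> * y\<^sup>2 - 2 * x * y"
    using assms by (simp add: power2_eq_square field_simps)
  finally show ?thesis
    by simp
qed

lemma energy_rate_le:
  fixes z\<^sub>1 z\<^sub>2 z\<^sub>3 z\<^sub>4 z\<^sub>1' z\<^sub>2' z\<^sub>3' z\<^sub>4' :: complex and K G \<delta> \<tau> :: real
  defines "S \<equiv> cmod z\<^sub>1 + cmod z\<^sub>2 + cmod z\<^sub>3 + cmod z\<^sub>4"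
    and "E \<equiv> (cmod z\<^sub>1)\<^sup>2 + (cmod z\<^sub>2)\<^sup>2 + (cmod z\<^sub>3)\<^sup>2 + (cmod z\<^sub>4)\<^sup>2"
  assumes "0 < \<tau>" "0 \<le> K" "0 \<le> G"
    and "cmod z\<^sub>1' \<le> K * (G\<^sup>2 * S + G ^ 3 * \<delta>)" "cmod z\<^sub>2' \<le> K * (G\<^sup>2 * S + G ^ 3 * \<delta>)"
    and "cmod z\<^sub>3' \<le> K * (G\<^sup>2 * S + G ^ 3 * \<delta>)" "cmod z\<^sub>4' \<le> K * (G\<^sup>2 * S + G ^ 3 * \<delta>)"
  shows "2 * Re (cnj z\<^sub>1 * z\<^sub>1') + 2 * Re (cnj z\<^sub>2 * z\<^sub>2') + 2 * Re (cnj z\<^sub>3 * z\<^sub>3') + 2 * Re (cnj z\<^sub>4 * z\<^sub>4')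
    \<le> (8 * K * G\<^sup>2 + 1 / \<tau>) * E + 4 * \<tau> * K\<^sup>2 * G ^ 6 * \<delta>\<^sup>2"
proof -
  define Y where "Y = K * (G\<^sup>2 * S + G ^ 3 * \<delta>)"
  have Re: "Re (cnj z * z') \<le> cmod z * Y" if "cmod z' \<le> Y" for z z'
    using complex_Re_le_cmod[of "cnj z * z'"] mult_left_mono[OF that norm_ge_zero[of z]]
    by (simp add: norm_mult)
  have S2: "S\<^sup>2 \<le> 4 * E"
    unfolding S_def E_def by (rule power2_sum4_le)
  have "2 * Re (cnj z\<^sub>1 * z\<^sub>1') + 2 * Re (cnj z\<^sub>2 * z\<^sub>2') + 2 * Re (cnj z\<^sub>3 * z\<^sub>3') + 2 * Re (cnj z\<^sub>4 * z\<^sub>4')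
      \<le> 2 * S * Y"
    using Re[of z\<^sub>1' z\<^sub>1] Re[of z\<^sub>2' z\<^sub>2] Re[of z\<^sub>3' z\<^sub>3] Re[of z\<^sub>4' z\<^sub>4] assms(6-9)
    unfolding S_def Y_def by (simp add: algebra_simps)
  also have "\<dots> = 2 * K * G\<^sup>2 * S\<^sup>2 + 2 * S * (K * G ^ 3 * \<delta>)"
    unfolding Y_def by (simp add: power2_eq_square algebra_simps)
  txt \<open>Weighting Young's inequality by \<open>4\<tau>\<close> makes the cross term cost only \<open>E/\<tau>\<close>, i.e. a factor
    \<open>e\<close> over one time step.\<close>
  also have "\<dots> \<le> 2 * K * G\<^sup>2 * (4 * E) + (S\<^sup>2 / (4 * \<tau>) + 4 * \<tau> * (K * G ^ 3 * \<delta>)\<^sup>2)"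
    using S2 assms(3-5) two_mult_le_weighted_squares[of "4 * \<tau>" S "K * G ^ 3 * \<delta>"]
    by (intro add_mono mult_left_mono) auto
  also have "\<dots> \<le> 2 * K * G\<^sup>2 * (4 * E) + (4 * E / (4 * \<tau>) + 4 * \<tau> * (K * G ^ 3 * \<delta>)\<^sup>2)"
    using S2 assms(3) by (intro add_mono divide_right_mono) auto
  also have "\<dots> = (8 * K * G\<^sup>2 + 1 / \<tau>) * E + 4 * \<tau> * K\<^sup>2 * G ^ 6 * \<delta>\<^sup>2"
    using assms(3) by (simp add: field_simps power2_eq_square eval_nat_numeral)
  finally show ?thesis .
qed

lemma linear_gronwall_Icc:
  fixes E E' :: "real \<Rightarrow> real"
  assumes deriv: "\<And>t. t \<in> {0..\<tau>} \<Longrightarrow> (E has_real_derivative E' t) (at t within {0..\<tau>})"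
    and rate: "\<And>t. t \<in> {0..\<tau>} \<Longrightarrow> E' t \<le> \<kappa> * E t + \<sigma>"
    and "0 \<le> \<kappa>" "0 \<le> \<sigma>" "0 \<le> E 0" "s \<in> {0..\<tau>}"
  shows "E s \<le> exp (\<kappa> * \<tau>) * (E 0 + \<sigma> * \<tau>)"
proof -
  define g where "g t = \<sigma> * t - exp (- \<kappa> * t) * E t" for t
  define g' where "g' t = \<sigma> - exp (- \<kappa> * t) * (E' t - \<kappa> * E t)" for t
  have g_deriv: "(g has_real_derivative g' t) (at t within {0..\<tau>})" if "t \<in> {0..\<tau>}" for t
    unfolding g_def g'_def using deriv[OF that]
    by (auto intro!: derivative_eq_intros simp: algebra_simps)
  have g'_nonneg: "0 \<le> g' t" if "t \<in> {0..\<tau>}" for t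
  proof -
    have "exp (- \<kappa> * t) * (E' t - \<kappa> * E t) \<le> exp (- \<kappa> * t) * \<sigma>"
      using rate[OF that] by (intro mult_left_mono) auto
    also have "\<dots> \<le> \<sigma>"
      using assms(3,4) that by (intro mult_left_le_one_le) auto
    finally show ?thesis
      unfolding g'_def by simp
  qed
  have g_cont: "continuous_on {0..\<tau>} g"
    using g_deriv by (meson DERIV_continuous continuous_on_eq_continuous_within)
  have "g 0 \<le> g s"
  proof (rule DERIV_nonneg_imp_increasing_open[of 0 s g])
    show "0 \<le> s"
      using assms(6) by simp
    show "continuous_on {0..s} g"
      using continuous_on_subset[OF g_cont] assms(6) by auto
  next
    fix t assume t: "0 < t" "t < s"
    then have "at t within {0..\<tau>} = at t"
      using assms(6) by (intro at_within_Icc_at) auto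
    then show "\<exists>y. (g has_real_derivative y) (at t) \<and> 0 \<le> y"
      using g_deriv[of t] g'_nonneg[of t] t assms(6) by auto
  qed
  then have "exp (- \<kappa> * s) * E s \<le> E 0 + \<sigma> * s"
    unfolding g_def by (simp add: algebra_simps)
  then have "E s \<le> exp (\<kappa> * s) * (E 0 + \<sigma> * s)"
    by (simp add: exp_minus field_simps)
  also have "\<dots> \<le> exp (\<kappa> * \<tau>) * (E 0 + \<sigma> * \<tau>)"
    using assms(3-6) by (intro mult_mono) (auto intro!: mult_left_mono)
  finally show ?thesis .
qed

lemma error_energy_le:
  fixes z\<^sub>1 z\<^sub>2 z\<^sub>3 z\<^sub>4 z\<^sub>1' z\<^sub>2' z\<^sub>3' z\<^sub>4' :: "real \<Rightarrow> complex" and K G \<delta> \<tau> :: real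
  defines "S \<equiv> \<lambda>t. cmod (z\<^sub>1 t) + cmod (z\<^sub>2 t) + cmod (z\<^sub>3 t) + cmod (z\<^sub>4 t)"
    and "E \<equiv> \<lambda>t. (cmod (z\<^sub>1 t))\<^sup>2 + (cmod (z\<^sub>2 t))\<^sup>2 + (cmod (z\<^sub>3 t))\<^sup>2 + (cmod (z\<^sub>4 t))\<^sup>2"
  assumes "0 < \<tau>" "0 \<le> K" "0 \<le> G" "0 \<le> \<delta>"
    and deriv: "\<And>t. t \<in> {0..\<tau>} \<Longrightarrow>
      (z\<^sub>1 has_vector_derivative z\<^sub>1' t) (at t within {0..\<tau>}) \<and>
      (z\<^sub>2 has_vector_derivative z\<^sub>2' t) (at t within {0..\<tau>}) \<and>
      (z\<^sub>3 has_vector_derivative z\<^sub>3' t) (at t within {0..\<tau>}) \<and>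
      (z\<^sub>4 has_vector_derivative z\<^sub>4' t) (at t within {0..\<tau>})"
    and rate: "\<And>t. t \<in> {0..\<tau>} \<Longrightarrow>
      cmod (z\<^sub>1' t) \<le> K * (G\<^sup>2 * S t + G ^ 3 * \<delta>) \<and> cmod (z\<^sub>2' t) \<le> K * (G\<^sup>2 * S t + G ^ 3 * \<delta>) \<and>
      cmod (z\<^sub>3' t) \<le> K * (G\<^sup>2 * S t + G ^ 3 * \<delta>) \<and> cmod (z\<^sub>4' t) \<le> K * (G\<^sup>2 * S t + G ^ 3 * \<delta>)"
    and "s \<in> {0..\<tau>}"
  shows "E s \<le> exp ((8 * K * G\<^sup>2 + 1 / \<tau>) * \<tau>) * (E 0 + 4 * \<tau> * K\<^sup>2 * G ^ 6 * \<delta>\<^sup>2 * \<tau>)"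
proof (rule linear_gronwall_Icc)
  fix t assume t: "t \<in> {0..\<tau>}"
  show "(E has_real_derivative 2 * Re (cnj (z\<^sub>1 t) * z\<^sub>1' t) + 2 * Re (cnj (z\<^sub>2 t) * z\<^sub>2' t)
      + 2 * Re (cnj (z\<^sub>3 t) * z\<^sub>3' t) + 2 * Re (cnj (z\<^sub>4 t) * z\<^sub>4' t)) (at t within {0..\<tau>})"
    unfolding E_def using deriv[OF t]
    by (intro DERIV_add has_real_derivative_cmod_power2) auto
  show "2 * Re (cnj (z\<^sub>1 t) * z\<^sub>1' t) + 2 * Re (cnj (z\<^sub>2 t) * z\<^sub>2' t)
      + 2 * Re (cnj (z\<^sub>3 t) * z\<^sub>3' t) + 2 * Re (cnj (z\<^sub>4 t) * z\<^sub>4' t)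
      \<le> (8 * K * G\<^sup>2 + 1 / \<tau>) * E t + 4 * \<tau> * K\<^sup>2 * G ^ 6 * \<delta>\<^sup>2"
    using energy_rate_le[where z\<^sub>1="z\<^sub>1 t" and z\<^sub>2="z\<^sub>2 t" and z\<^sub>3="z\<^sub>3 t" and z\<^sub>4="z\<^sub>4 t"
        and z\<^sub>1'="z\<^sub>1' t" and z\<^sub>2'="z\<^sub>2' t" and z\<^sub>3'="z\<^sub>3' t" and z\<^sub>4'="z\<^sub>4' t", OF assms(3-5)] rate[OF t]
    unfolding E_def S_def by blast
next
  show "0 \<le> E 0"
    unfolding E_def by simp
qed (use assms(3-6,9) in auto)

text \<open>\<open>(P, Q)\<close> and \<open>(P\<^sub>2, Q\<^sub>2)\<close> are the exact solution sampled along the \<open>u\<close>- and the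
  \<open>v\<close>-characteristic; \<open>(u, v)\<close> is the numerical solution of (N).\<close>

lemma perturbed_NF_error_energy_le:
  fixes P Q P\<^sub>2 Q\<^sub>2 u v :: "real \<Rightarrow> complex" and m \<alpha> \<beta> K G \<delta> \<tau> :: real
  defines "A \<equiv> \<lambda>t. P t - u t" and "B \<equiv> \<lambda>t. Q\<^sub>2 t - v t"
  defines "E \<equiv> \<lambda>t. (cmod (A t))\<^sup>2 + (cmod (B t))\<^sup>2 + (cmod (A t))\<^sup>2 * (cmod (v t))\<^sup>2
    + (cmod (B t))\<^sup>2 * (cmod (u t))\<^sup>2"
  assumes "0 \<le> m" "0 < \<tau>" "1 \<le> G" "0 \<le> \<delta>" "2 * (m + 2 * \<bar>\<alpha>\<bar> + 8 * \<bar>\<beta>\<bar>) \<le> K"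
    and deriv: "\<And>t. t \<in> {0..\<tau>} \<Longrightarrow>
      (P has_vector_derivative NF1 m \<alpha> \<beta> (P t) (Q t)) (at t within {0..\<tau>}) \<and>
      (Q\<^sub>2 has_vector_derivative NF2 m \<alpha> \<beta> (P\<^sub>2 t) (Q\<^sub>2 t)) (at t within {0..\<tau>}) \<and>
      (u has_vector_derivative NF1 m \<alpha> \<beta> (u t) (v t)) (at t within {0..\<tau>}) \<and>
      (v has_vector_derivative NF2 m \<alpha> \<beta> (u t) (v t)) (at t within {0..\<tau>})"
    and bounded: "\<And>t. t \<in> {0..\<tau>} \<Longrightarrow> cmod (P t) \<le> G \<and> cmod (Q t) \<le> G \<and> cmod (P\<^sub>2 t) \<le> G
      \<and> cmod (Q\<^sub>2 t) \<le> G \<and> cmod (u t) \<le> G \<and> cmod (v t) \<le> G"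
    and shifted: "\<And>t. t \<in> {0..\<tau>} \<Longrightarrow> cmod (Q t - Q\<^sub>2 t) \<le> \<delta> \<and> cmod (P\<^sub>2 t - P t) \<le> \<delta>"
    and "s \<in> {0..\<tau>}"
  shows "E s \<le> exp ((8 * K * G\<^sup>2 + 1 / \<tau>) * \<tau>) * (E 0 + 4 * \<tau> * K\<^sup>2 * G ^ 6 * \<delta>\<^sup>2 * \<tau>)"
proof -
  define A' where "A' t = NF1 m \<alpha> \<beta> (P t) (Q t) - NF1 m \<alpha> \<beta> (u t) (v t)" for t
  define B' where "B' t = NF1 m \<alpha> \<beta> (Q\<^sub>2 t) (P\<^sub>2 t) - NF1 m \<alpha> \<beta> (v t) (u t)" for t
  define W where "W t = G\<^sup>2 * (cmod (A t) + cmod (B t) + cmod (A t * v t) + cmod (B t * u t)) + G ^ 3 * \<delta>"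
    for t
  have rate_A: "cmod (A' t) \<le> K * W t" "cmod (A t * NF2 m \<alpha> \<beta> (u t) (v t) + A' t * v t) \<le> K * W t"
    if "t \<in> {0..\<tau>}" for t
  proof -
    have "cmod (Q t - v t) \<le> cmod (B t) + \<delta>"
      using shifted[OF that] norm_triangle_ineq[of "Q\<^sub>2 t - v t" "Q t - Q\<^sub>2 t"] unfolding B_def by simp
    with bounded[OF that] show "cmod (A' t) \<le> K * W t"
      "cmod (A t * NF2 m \<alpha> \<beta> (u t) (v t) + A' t * v t) \<le> K * W t"
      using norm_NF1_diff_le_weight[where p="P t" and q="Q t" and u="u t" and v="v t" and b="cmod (B t)",
          OF assms(4,6) _ _ _ _ _ norm_ge_zero assms(7,8)]
      unfolding A'_def A_def W_def by (simp_all add: norm_mult)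
  qed
  have rate_B: "cmod (B' t) \<le> K * W t" "cmod (B t * NF1 m \<alpha> \<beta> (u t) (v t) + B' t * u t) \<le> K * W t"
    if "t \<in> {0..\<tau>}" for t
  proof -
    have "cmod (P\<^sub>2 t - u t) \<le> cmod (A t) + \<delta>"
      using shifted[OF that] norm_triangle_ineq[of "P t - u t" "P\<^sub>2 t - P t"] unfolding A_def by simp
    moreover have "G\<^sup>2 * (cmod (B t) + cmod (A t) + cmod (B t) * cmod (u t) + cmod (A t) * cmod (v t))
        + G ^ 3 * \<delta> = W t"
      unfolding W_def by (simp add: norm_mult)
    ultimately show "cmod (B' t) \<le> K * W t" "cmod (B t * NF1 m \<alpha> \<beta> (u t) (v t) + B' t * u t) \<le> K * W t"
      using bounded[OF that] norm_NF1_diff_le_weight[where p="Q\<^sub>2 t" and q="P\<^sub>2 t" and u="v t" and v="u t"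
          and b="cmod (A t)", OF assms(4,6) _ _ _ _ _ norm_ge_zero assms(7,8)]
      unfolding B'_def B_def NF2_swap by simp_all
  qed
  have deriv_AB: "(A has_vector_derivative A' t) (at t within {0..\<tau>})"
    "(B has_vector_derivative B' t) (at t within {0..\<tau>})" if "t \<in> {0..\<tau>}" for t
    using deriv[OF that] unfolding A_def B_def A'_def B'_def NF2_swap
    by (auto intro: has_vector_derivative_diff)
  have "0 \<le> K"
    using assms(4,8) by simp
  then have "(cmod (A s))\<^sup>2 + (cmod (B s))\<^sup>2 + (cmod (A s * v s))\<^sup>2 + (cmod (B s * u s))\<^sup>2
    \<le> exp ((8 * K * G\<^sup>2 + 1 / \<tau>) * \<tau>) * ((cmod (A 0))\<^sup>2 + (cmod (B 0))\<^sup>2 + (cmod (A 0 * v 0))\<^sup>2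
      + (cmod (B 0 * u 0))\<^sup>2 + 4 * \<tau> * K\<^sup>2 * G ^ 6 * \<delta>\<^sup>2 * \<tau>)"
    using assms(5-7,12) deriv deriv_AB rate_A rate_B
    by (intro error_energy_le[where z\<^sub>3="\<lambda>t. A t * v t" and z\<^sub>4="\<lambda>t. B t * u t"
          and z\<^sub>3'="\<lambda>t. A t * NF2 m \<alpha> \<beta> (u t) (v t) + A' t * v t"
          and z\<^sub>4'="\<lambda>t. B t * NF1 m \<alpha> \<beta> (u t) (v t) + B' t * u t"])
      (auto simp: W_def intro!: has_vector_derivative_mult)
  then show ?thesis
    unfolding E_def by (simp add: norm_mult power_mult_distrib)
qed

section \<open>Characteristics of the NLDE\<close>

lemma has_vector_derivative_along_line:
  fixes f :: "real \<times> real \<Rightarrow> complex" and x\<^sub>0 t\<^sub>0 a b :: real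
  defines "\<gamma> \<equiv> \<lambda>s. (x\<^sub>0 + a * s, t\<^sub>0 + b * s)"
  assumes "f differentiable (at (\<gamma> s) within S)" and "\<gamma> ` I \<subseteq> S"
  shows "((\<lambda>s. f (\<gamma> s)) has_vector_derivative
    of_real a * pdx f S (\<gamma> s) + of_real b * pdt f S (\<gamma> s)) (at s within I)"
proof -
  let ?F = "frechet_derivative f (at (\<gamma> s) within S)"
  have "(\<gamma> has_vector_derivative (a, b)) (at s within I)"
    unfolding \<gamma>_def by (auto intro!: derivative_eq_intros)
  moreover have "(f has_derivative ?F) (at (\<gamma> s) within \<gamma> ` I)"
    using assms(2,3) frechet_derivative_works has_derivative_subset by blast
  ultimately have "((\<lambda>s. f (\<gamma> s)) has_vector_derivative ?F (a, b)) (at s within I)"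
    by (rule vector_derivative_diff_chain_within[unfolded o_def])
  moreover have "?F (a, b) = of_real a * pdx f S (\<gamma> s) + of_real b * pdt f S (\<gamma> s)"
  proof -
    have lin: "linear ?F"
      using assms(2) frechet_derivative_works has_derivative_linear by blast
    have "?F (a, b) = ?F (a *\<^sub>R (1, 0) + b *\<^sub>R (0, 1))"
      by simp
    also have "\<dots> = a *\<^sub>R ?F (1, 0) + b *\<^sub>R ?F (0, 1)"
      by (simp only: linear_add[OF lin] linear_scale[OF lin])
    finally show ?thesis
      unfolding pdx_def pdt_def by (simp add: scaleR_conv_of_real)
  qed
  ultimately show ?thesis
    by simp
qed

lemma norm_diff_le_pdx_bound:
  fixes f :: "real \<times> real \<Rightarrow> complex"
  assumes "\<forall>p\<in>UNIV \<times> J. f differentiable (at p within UNIV \<times> J)"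
    and "\<forall>p\<in>UNIV \<times> J. cmod (pdx f (UNIV \<times> J) p) \<le> M" and "t \<in> J"
  shows "cmod (f (x, t) - f (y, t)) \<le> M * \<bar>x - y\<bar>"
proof (rule differentiable_bound[of UNIV "\<lambda>z. f (z, t)" "\<lambda>z h. h *\<^sub>R pdx f (UNIV \<times> J) (z, t)", simplified])
  fix z :: real
  have "((\<lambda>s. f (0 + 1 * s, t + 0 * s)) has_vector_derivative
      of_real 1 * pdx f (UNIV \<times> J) (0 + 1 * z, t + 0 * z)
      + of_real 0 * pdt f (UNIV \<times> J) (0 + 1 * z, t + 0 * z)) (at z)"
    using assms(1,3) by (intro has_vector_derivative_along_line) auto
  then show "((\<lambda>z. f (z, t)) has_derivative (\<lambda>h. h *\<^sub>R pdx f (UNIV \<times> J) (z, t))) (at z)"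
    by (simp add: has_vector_derivative_def)
  show "onorm (\<lambda>h. h *\<^sub>R pdx f (UNIV \<times> J) (z, t)) \<le> M"
  proof -
    have "onorm (\<lambda>h::real. h *\<^sub>R pdx f (UNIV \<times> J) (z, t)) = cmod (pdx f (UNIV \<times> J) (z, t))"
      using onorm_scaleR_left[OF bounded_linear_ident[where 'a=real]] onorm_id[where 'a=real] by simp
    then show ?thesis
      using assms(2,3) by simp
  qed
qed

lemma NLDE_smooth_solution_differentiable:
  assumes "NLDE_smooth_solution m \<alpha> \<beta> T uh vh" "p \<in> UNIV \<times> {0..T}"
  shows "uh differentiable (at p within UNIV \<times> {0..T})" and "vh differentiable (at p within UNIV \<times> {0..T})"
  using assms unfolding NLDE_smooth_solution_def Let_def by (auto elim: smooth_on_set.cases)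

lemma NLDE_characteristics:
  fixes uh vh :: "real \<times> real \<Rightarrow> complex"
  assumes "NLDE_smooth_solution m \<alpha> \<beta> T uh vh" "0 \<le> t\<^sub>0" "t\<^sub>0 + \<tau> \<le> T" "t \<in> {0..\<tau>}"
  shows "((\<lambda>s. uh (x + s, t\<^sub>0 + s)) has_vector_derivative
      NF1 m \<alpha> \<beta> (uh (x + t, t\<^sub>0 + t)) (vh (x + t, t\<^sub>0 + t))) (at t within {0..\<tau>})"
    and "((\<lambda>s. vh (x - s, t\<^sub>0 + s)) has_vector_derivative
      NF2 m \<alpha> \<beta> (uh (x - t, t\<^sub>0 + t)) (vh (x - t, t\<^sub>0 + t))) (at t within {0..\<tau>})"
proof -
  define S where "S = (UNIV :: real set) \<times> {0..T}"
  have line: "(\<lambda>s. (x + c * s, t\<^sub>0 + 1 * s)) ` {0..\<tau>} \<subseteq> S" for c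
    using assms(2,3) unfolding S_def by auto
  then have "(x + c * t, t\<^sub>0 + 1 * t) \<in> S" for c
    using assms(4) by blast
  moreover have "\<forall>p\<in>S. pdt uh S p + pdx uh S p = NF1 m \<alpha> \<beta> (uh p) (vh p) \<and>
      pdt vh S p - pdx vh S p = NF2 m \<alpha> \<beta> (uh p) (vh p)"
    using assms(1) unfolding NLDE_smooth_solution_def S_def Let_def by auto
  ultimately show "((\<lambda>s. uh (x + s, t\<^sub>0 + s)) has_vector_derivative
      NF1 m \<alpha> \<beta> (uh (x + t, t\<^sub>0 + t)) (vh (x + t, t\<^sub>0 + t))) (at t within {0..\<tau>})"
    and "((\<lambda>s. vh (x - s, t\<^sub>0 + s)) has_vector_derivative
      NF2 m \<alpha> \<beta> (uh (x - t, t\<^sub>0 + t)) (vh (x - t, t\<^sub>0 + t))) (at t within {0..\<tau>})"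
    using has_vector_derivative_along_line[where f=uh and a=1 and b=1 and s=t, OF _ line]
      has_vector_derivative_along_line[where f=vh and a="-1" and b=1 and s=t, OF _ line]
      NLDE_smooth_solution_differentiable[OF assms(1)]
    unfolding S_def by (simp_all add: add.commute)
qed

lemma N_solution_norm_le:
  assumes "N_solution m \<alpha> \<beta> \<tau> w\<^sub>0 w" "t \<in> {0..\<tau>}"
  shows "cmod (fst (w t)) \<le> sqrt ((cmod (fst w\<^sub>0))\<^sup>2 + (cmod (snd w\<^sub>0))\<^sup>2)"
    and "cmod (snd (w t)) \<le> sqrt ((cmod (fst w\<^sub>0))\<^sup>2 + (cmod (snd w\<^sub>0))\<^sup>2)"
proof -
  have "(cmod (fst (w t)))\<^sup>2 \<le> (cmod (fst w\<^sub>0))\<^sup>2 + (cmod (snd w\<^sub>0))\<^sup>2"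
    and "(cmod (snd (w t)))\<^sup>2 \<le> (cmod (fst w\<^sub>0))\<^sup>2 + (cmod (snd w\<^sub>0))\<^sup>2"
    using N_solution_mass_eq[OF assms] zero_le_power2[of "cmod (fst (w t))"]
      zero_le_power2[of "cmod (snd (w t))"] by linarith+
  then show "cmod (fst (w t)) \<le> sqrt ((cmod (fst w\<^sub>0))\<^sup>2 + (cmod (snd w\<^sub>0))\<^sup>2)"
    and "cmod (snd (w t)) \<le> sqrt ((cmod (fst w\<^sub>0))\<^sup>2 + (cmod (snd w\<^sub>0))\<^sup>2)"
    by (simp_all add: real_le_rsqrt)
qed

lemma splitting_cell_error_le:
  fixes uh vh :: "real \<times> real \<Rightarrow> complex" and w :: "real \<Rightarrow> complex \<times> complex"
    and T x t\<^sub>0 \<tau> M\<^sub>0 M \<rho> K m \<alpha> \<beta> :: real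
  defines "S \<equiv> (UNIV :: real set) \<times> {0..T}"
  defines "Uc \<equiv> \<lambda>s. uh (x + s, t\<^sub>0 + s) - fst (w s)"
    and "Vc \<equiv> \<lambda>s. vh (x + 2 * \<tau> - s, t\<^sub>0 + s) - snd (w s)"
  defines "E \<equiv> \<lambda>s. (cmod (Uc s))\<^sup>2 + (cmod (Vc s))\<^sup>2
    + (cmod (Uc s))\<^sup>2 * (cmod (snd (w s)))\<^sup>2 + (cmod (Vc s))\<^sup>2 * (cmod (fst (w s)))\<^sup>2"
    and "G \<equiv> M\<^sub>0 + sqrt \<rho>"
  assumes "0 \<le> m" "0 < \<tau>" "0 \<le> t\<^sub>0" "t\<^sub>0 + \<tau> \<le> T" and sol: "NLDE_smooth_solution m \<alpha> \<beta> T uh vh"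
    and "1 \<le> M\<^sub>0" and bounded: "\<forall>p\<in>S. cmod (uh p) \<le> M\<^sub>0 \<and> cmod (vh p) \<le> M\<^sub>0"
    and "0 \<le> M" and Lipschitz: "\<forall>p\<in>S. cmod (pdx uh S p) \<le> M \<and> cmod (pdx vh S p) \<le> M"
    and ode: "N_solution m \<alpha> \<beta> \<tau> w\<^sub>0 w" and mass: "(cmod (fst w\<^sub>0))\<^sup>2 + (cmod (snd w\<^sub>0))\<^sup>2 = \<rho>"
    and "2 * (m + 2 * \<bar>\<alpha>\<bar> + 8 * \<bar>\<beta>\<bar>) \<le> K" "s \<in> {0..\<tau>}"
  shows "E s \<le> exp ((8 * K * G\<^sup>2 + 1 / \<tau>) * \<tau>) * (E 0 + 4 * \<tau> * K\<^sup>2 * G ^ 6 * (2 * M * \<tau>)\<^sup>2 * \<tau>)"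
proof -
  have on_S: "(x + t, t\<^sub>0 + t) \<in> S" "(x + 2 * \<tau> - t, t\<^sub>0 + t) \<in> S" if "t \<in> {0..\<tau>}" for t
    using that assms(8,9) unfolding S_def by auto
  have "0 \<le> \<rho>"
    using mass by (metis add_nonneg_nonneg zero_le_power2)
  then have G: "1 \<le> G" "M\<^sub>0 \<le> G" "sqrt \<rho> \<le> G"
    using assms(11) real_sqrt_ge_zero[of \<rho>] unfolding G_def by linarith+
  have bounds: "cmod (uh (x + t, t\<^sub>0 + t)) \<le> G \<and> cmod (vh (x + t, t\<^sub>0 + t)) \<le> G \<and>
      cmod (uh (x + 2 * \<tau> - t, t\<^sub>0 + t)) \<le> G \<and> cmod (vh (x + 2 * \<tau> - t, t\<^sub>0 + t)) \<le> G \<and>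
      cmod (fst (w t)) \<le> G \<and> cmod (snd (w t)) \<le> G" if "t \<in> {0..\<tau>}" for t
    using bounded on_S[OF that] N_solution_norm_le[OF ode that] G(2,3) unfolding mass by force
  have shift: "cmod (f (x + t, t\<^sub>0 + t) - f (x + 2 * \<tau> - t, t\<^sub>0 + t)) \<le> 2 * M * \<tau>"
    if "f = uh \<or> f = vh" "t \<in> {0..\<tau>}" for f t
  proof -
    have "\<forall>p\<in>UNIV \<times> {0..T}. f differentiable (at p within UNIV \<times> {0..T})"
      using that(1) NLDE_smooth_solution_differentiable[OF sol] by blast
    moreover have "\<forall>p\<in>UNIV \<times> {0..T}. cmod (pdx f (UNIV \<times> {0..T}) p) \<le> M"
      using that(1) Lipschitz unfolding S_def by auto
    moreover have "t\<^sub>0 + t \<in> {0..T}"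
      using on_S[OF that(2)] unfolding S_def by auto
    ultimately have "cmod (f (x + t, t\<^sub>0 + t) - f (x + 2 * \<tau> - t, t\<^sub>0 + t))
        \<le> M * \<bar>(x + t) - (x + 2 * \<tau> - t)\<bar>"
      by (rule norm_diff_le_pdx_bound)
    also have "\<dots> \<le> M * (2 * \<tau>)"
      using that(2) assms(13) by (intro mult_left_mono) auto
    finally show ?thesis
      by simp
  qed
  show ?thesis
    unfolding E_def Uc_def Vc_def
    using NLDE_characteristics[OF sol assms(8,9)] N_solution_components[OF ode] bounds
      shift[of vh] shift[of uh] assms(6,7,13,17,18) G(1)
    by (intro perturbed_NF_error_energy_le[where P\<^sub>2="\<lambda>t. uh (x + 2 * \<tau> - t, t\<^sub>0 + t)"
          and Q="\<lambda>t. vh (x + t, t\<^sub>0 + t)"]) (auto simp: norm_minus_commute)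
qed

lemma gronwall_factor_le:
  fixes K M\<^sub>0 M \<tau> \<rho> c\<^sub>0 E\<^sub>0 :: real
  assumes "0 \<le> K" "0 < \<tau>" "\<tau> < 1" "0 \<le> \<rho>" "\<rho> * \<tau> \<le> c\<^sub>0" "0 \<le> E\<^sub>0"
  defines "G \<equiv> M\<^sub>0 + sqrt \<rho>" and "\<Lambda> \<equiv> 16 * K * (M\<^sub>0\<^sup>2 + c\<^sub>0) + 1"
  shows "exp ((8 * K * G\<^sup>2 + 1 / \<tau>) * \<tau>) * (E\<^sub>0 + 4 * \<tau> * K\<^sup>2 * G ^ 6 * (2 * M * \<tau>)\<^sup>2 * \<tau>)
    \<le> exp \<Lambda> * E\<^sub>0 + exp \<Lambda> * (128 * K\<^sup>2 * (M\<^sub>0\<^sup>2 + c\<^sub>0) ^ 3) * M\<^sup>2 * \<tau>"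
proof -
  have "G\<^sup>2 \<le> 2 * M\<^sub>0\<^sup>2 + 2 * \<rho>"
    using assms(4) sum_squares_bound[of M\<^sub>0 "sqrt \<rho>"] unfolding G_def by (simp add: power2_sum)
  then have "G\<^sup>2 * \<tau> \<le> (2 * M\<^sub>0\<^sup>2 + 2 * \<rho>) * \<tau>"
    using assms(2) by (simp add: mult_right_mono)
  then have "G\<^sup>2 * \<tau> \<le> 2 * (M\<^sub>0\<^sup>2 * \<tau>) + 2 * (\<rho> * \<tau>)"
    by (simp add: algebra_simps)
  moreover have "M\<^sub>0\<^sup>2 * \<tau> \<le> M\<^sub>0\<^sup>2"
    using assms(2,3) by (simp add: mult_left_le)
  ultimately have G\<tau>: "G\<^sup>2 * \<tau> \<le> 2 * (M\<^sub>0\<^sup>2 + c\<^sub>0)"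
    using assms(5) by (simp add: algebra_simps)
  have "(8 * K * G\<^sup>2 + 1 / \<tau>) * \<tau> = 8 * K * (G\<^sup>2 * \<tau>) + 1"
    using assms(2) by (simp add: field_simps)
  also have "\<dots> \<le> \<Lambda>"
    unfolding \<Lambda>_def using mult_left_mono[OF G\<tau>, of "8 * K"] assms(1) by (simp add: algebra_simps)
  finally have exponent: "exp ((8 * K * G\<^sup>2 + 1 / \<tau>) * \<tau>) \<le> exp \<Lambda>"
    by simp
  have "4 * \<tau> * K\<^sup>2 * G ^ 6 * (2 * M * \<tau>)\<^sup>2 * \<tau> = 16 * K\<^sup>2 * M\<^sup>2 * \<tau> * (G\<^sup>2 * \<tau>) ^ 3"
    by (simp add: power2_eq_square eval_nat_numeral algebra_simps)
  also have "\<dots> \<le> 16 * K\<^sup>2 * M\<^sup>2 * \<tau> * (2 * (M\<^sub>0\<^sup>2 + c\<^sub>0)) ^ 3"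
    using G\<tau> assms(2) by (intro mult_left_mono power_mono) auto
  also have "\<dots> = 128 * K\<^sup>2 * (M\<^sub>0\<^sup>2 + c\<^sub>0) ^ 3 * M\<^sup>2 * \<tau>"
    by (simp only: power_mult_distrib) simp
  finally have "E\<^sub>0 + 4 * \<tau> * K\<^sup>2 * G ^ 6 * (2 * M * \<tau>)\<^sup>2 * \<tau> \<le> E\<^sub>0 + 128 * K\<^sup>2 * (M\<^sub>0\<^sup>2 + c\<^sub>0) ^ 3 * M\<^sup>2 * \<tau>"
    by simp
  with exponent have "exp ((8 * K * G\<^sup>2 + 1 / \<tau>) * \<tau>) * (E\<^sub>0 + 4 * \<tau> * K\<^sup>2 * G ^ 6 * (2 * M * \<tau>)\<^sup>2 * \<tau>)
      \<le> exp \<Lambda> * (E\<^sub>0 + 128 * K\<^sup>2 * (M\<^sub>0\<^sup>2 + c\<^sub>0) ^ 3 * M\<^sup>2 * \<tau>)"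
    using assms(2,6) by (intro mult_mono) auto
  then show ?thesis
    by (simp add: algebra_simps)
qed

lemma splitting_error_le:
  fixes uh vh :: "real \<times> real \<Rightarrow> complex" and U V :: "int \<Rightarrow> nat \<Rightarrow> complex"
    and W :: "int \<Rightarrow> nat \<Rightarrow> real \<Rightarrow> complex \<times> complex" and m \<alpha> \<beta> T \<tau> M\<^sub>0 M c\<^sub>0 :: real
    and j :: int and n :: nat
  defines "S \<equiv> (UNIV :: real set) \<times> {0..T}"
  defines "Uc \<equiv> \<lambda>s. uh (of_int j * \<tau> + s, real n * \<tau> + s) - fst (W (j + 1) n s)"
    and "Vc \<equiv> \<lambda>s. vh (of_int (j + 2) * \<tau> - s, real n * \<tau> + s) - snd (W (j + 1) n s)"
  defines "E \<equiv> \<lambda>s. (cmod (Uc s))\<^sup>2 + (cmod (Vc s))\<^sup>2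
    + (cmod (Uc s))\<^sup>2 * (cmod (snd (W (j + 1) n s)))\<^sup>2 + (cmod (Vc s))\<^sup>2 * (cmod (fst (W (j + 1) n s)))\<^sup>2"
    and "K \<equiv> 2 * (m + 2 * \<bar>\<alpha>\<bar> + 8 * \<bar>\<beta>\<bar>) + 1"
  defines "\<Lambda> \<equiv> 16 * K * (M\<^sub>0\<^sup>2 + c\<^sub>0) + 1"
  assumes "0 \<le> m" "0 < \<tau>" "\<tau> < 1" "real (n + 1) * \<tau> \<le> T" "NLDE_smooth_solution m \<alpha> \<beta> T uh vh"
    and "1 \<le> M\<^sub>0" "\<forall>p\<in>S. cmod (uh p) \<le> M\<^sub>0 \<and> cmod (vh p) \<le> M\<^sub>0"
    and "0 \<le> M" "\<forall>p\<in>S. cmod (pdx uh S p) \<le> M \<and> cmod (pdx vh S p) \<le> M"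
    and scheme: "splitting_scheme m \<alpha> \<beta> \<tau> U V W"
    and summable: "(\<lambda>j. (cmod (U j 0))\<^sup>2 + (cmod (V j 0))\<^sup>2) summable_on UNIV"
    and "(\<Sum>\<^sub>\<infinity>j. (cmod (U j 0))\<^sup>2 + (cmod (V j 0))\<^sup>2) * \<tau> \<le> c\<^sub>0" "s \<in> {0..\<tau>}"
  shows "E s \<le> exp \<Lambda> * E 0 + exp \<Lambda> * (128 * K\<^sup>2 * (M\<^sub>0\<^sup>2 + c\<^sub>0) ^ 3) * M\<^sup>2 * \<tau>"
proof -
  define \<rho> where "\<rho> = (cmod (U j n))\<^sup>2 + (cmod (V (j + 2) n))\<^sup>2"
  have "\<rho> * \<tau> \<le> c\<^sub>0"
    using splitting_scheme_cell_mass_le[OF scheme _ summable, of j n] assms(8,18)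
    unfolding \<rho>_def by (smt (verit) mult_right_mono)
  moreover have "0 \<le> \<rho>"
    unfolding \<rho>_def by simp
  moreover have "0 \<le> E 0"
    unfolding E_def by simp
  moreover have "E s \<le> exp ((8 * K * (M\<^sub>0 + sqrt \<rho>)\<^sup>2 + 1 / \<tau>) * \<tau>)
      * (E 0 + 4 * \<tau> * K\<^sup>2 * (M\<^sub>0 + sqrt \<rho>) ^ 6 * (2 * M * \<tau>)\<^sup>2 * \<tau>)"
  proof -
    have "N_solution m \<alpha> \<beta> \<tau> (U j n, V (j + 2) n) (W (j + 1) n)"
      using scheme unfolding splitting_scheme_def by (metis add_diff_cancel_right' add.assoc one_add_one)
    moreover have "0 \<le> real n * \<tau>" "real n * \<tau> + \<tau> \<le> T"
      using assms(8,10) by (simp_all add: algebra_simps)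
    moreover have "2 * (m + 2 * \<bar>\<alpha>\<bar> + 8 * \<bar>\<beta>\<bar>) \<le> K"
      unfolding K_def by simp
    moreover have "of_int (j + 2) * \<tau> = of_int j * \<tau> + 2 * \<tau>"
      by (simp add: algebra_simps)
    moreover have "(cmod (fst (U j n, V (j + 2) n)))\<^sup>2 + (cmod (snd (U j n, V (j + 2) n)))\<^sup>2 = \<rho>"
      unfolding \<rho>_def by simp
    ultimately show ?thesis
      using splitting_cell_error_le[where x="of_int j * \<tau>" and t\<^sub>0="real n * \<tau>" and w="W (j + 1) n"
          and w\<^sub>0="(U j n, V (j + 2) n)" and \<rho>=\<rho> and T=T,
          OF assms(7,8) _ _ assms(11-15)[unfolded S_def] _ _ _ assms(19)]
      unfolding E_def Uc_def Vc_def by simp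
  qed
  moreover have "0 \<le> K"
    unfolding K_def using assms(7) by simp
  ultimately show ?thesis
    unfolding \<Lambda>_def using gronwall_factor_le[of K \<tau> \<rho> c\<^sub>0 "E 0" M\<^sub>0 M] assms(8,9)
    by (meson order_trans)
qed

theorem lemma4p3:
  fixes m \<alpha> \<beta> c0 M0 M :: real
  assumes "m \<ge> 0" and "c0 > 0"
  shows "\<exists>C2 C3. C2 > 0 \<and> C3 > 0 \<and>
    (\<forall>T (uh :: real \<times> real \<Rightarrow> complex) (vh :: real \<times> real \<Rightarrow> complex).
       T > 0 \<and> NLDE_smooth_solution m \<alpha> \<beta> T uh vh
       \<and> bdd_above ((\<lambda>p. cmod (uh p) + cmod (vh p) + 1) ` (UNIV \<times> {0..T}))
       \<and> M0 = (SUP p\<in>UNIV \<times> {0..T}. cmod (uh p) + cmod (vh p) + 1)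
       \<and> bdd_above ((\<lambda>p. let S = UNIV \<times> {0..T} in
              cmod (pdt uh S p) + cmod (pdx uh S p) + cmod (pdt vh S p) + cmod (pdx vh S p) + 1)
            ` (UNIV \<times> {0..T}))
       \<and> M = (SUP p\<in>UNIV \<times> {0..T}. let S = UNIV \<times> {0..T} in
              cmod (pdt uh S p) + cmod (pdx uh S p) + cmod (pdt vh S p) + cmod (pdx vh S p) + 1)
     \<longrightarrow>
     (\<forall>\<tau> U V W. 0 < \<tau> \<and> \<tau> < 1 \<and> splitting_scheme m \<alpha> \<beta> \<tau> U V W
        \<and> (\<lambda>j. (cmod (U j 0))\<^sup>2 + (cmod (V j 0))\<^sup>2) summable_on UNIV
        \<and> (\<Sum>\<^sub>\<infinity>j. (cmod (U j 0))\<^sup>2 + (cmod (V j 0))\<^sup>2) * \<tau> \<le> c0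
      \<longrightarrow>
      (\<forall>(j::int) (n::nat) s. real (n + 1) * \<tau> \<le> T \<and> 0 \<le> s \<and> s \<le> \<tau> \<longrightarrow>
        (let Uc = (\<lambda>s. uh (of_int j * \<tau> + s, real n * \<tau> + s) - fst (W (j + 1) n s));
             Vc = (\<lambda>s. vh (of_int (j + 2) * \<tau> - s, real n * \<tau> + s) - snd (W (j + 1) n s));
             L = (\<lambda>s. (cmod (Uc s))\<^sup>2 + (cmod (Vc s))\<^sup>2);
             D = (\<lambda>s. (cmod (Uc s))\<^sup>2 * (cmod (snd (W (j + 1) n s)))\<^sup>2
                      + (cmod (Vc s))\<^sup>2 * (cmod (fst (W (j + 1) n s)))\<^sup>2)
         in L s + D s \<le> C2 * (L 0 + D 0) + C3 * M\<^sup>2 * \<tau>))))"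
proof -
  define K where "K = 2 * (m + 2 * \<bar>\<alpha>\<bar> + 8 * \<bar>\<beta>\<bar>) + 1"
    \<comment> \<open>the \<open>+ 1\<close> keeps \<open>C3 > 0\<close> when \<open>m = \<alpha> = \<beta> = 0\<close>\<close>
  define \<Lambda> where "\<Lambda> = 16 * K * (M0\<^sup>2 + c0) + 1"
  have "0 < K"
    unfolding K_def using assms(1) by simp
  then have C: "0 < exp \<Lambda>" "0 < exp \<Lambda> * (128 * K\<^sup>2 * (M0\<^sup>2 + c0) ^ 3)"
    using assms(2) add_pos_nonneg[OF assms(2) zero_le_power2[of M0]] by simp_all
  show ?thesis
  proof (rule exI[of _ "exp \<Lambda>"], rule exI[of _ "exp \<Lambda> * (128 * K\<^sup>2 * (M0\<^sup>2 + c0) ^ 3)"],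
      intro conjI C allI impI, goal_cases)
    case (1 T uh vh \<tau> U V W j n s)
    define S where "S = (UNIV :: real set) \<times> {0..T}"
    have "cmod (uh p) + cmod (vh p) + 1 \<le> M0"
      and "cmod (pdt uh S p) + cmod (pdx uh S p) + cmod (pdt vh S p) + cmod (pdx vh S p) + 1 \<le> M"
      if "p \<in> S" for p
      using 1(1) that cSUP_upper unfolding S_def Let_def by (metis (no_types, lifting))+
    moreover have "(0, 0) \<in> S"
      using 1(1) unfolding S_def by auto
    ultimately have "1 \<le> M0" "\<forall>p\<in>S. cmod (uh p) \<le> M0 \<and> cmod (vh p) \<le> M0"
      and "0 \<le> M" "\<forall>p\<in>S. cmod (pdx uh S p) \<le> M \<and> cmod (pdx vh S p) \<le> M"
      by (smt (verit) norm_ge_zero)+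
    moreover have "NLDE_smooth_solution m \<alpha> \<beta> T uh vh" "0 < \<tau>" "\<tau> < 1" "real (n + 1) * \<tau> \<le> T"
      "splitting_scheme m \<alpha> \<beta> \<tau> U V W" "(\<lambda>j. (cmod (U j 0))\<^sup>2 + (cmod (V j 0))\<^sup>2) summable_on UNIV"
      "(\<Sum>\<^sub>\<infinity>j. (cmod (U j 0))\<^sup>2 + (cmod (V j 0))\<^sup>2) * \<tau> \<le> c0" "s \<in> {0..\<tau>}"
      using 1 by auto
    ultimately show ?case
      using splitting_error_le[OF assms(1), of \<tau> n T \<alpha> \<beta> uh vh M0 M U V W c0 s j]
      unfolding S_def K_def \<Lambda>_def Let_def by (simp add: add.assoc)
  qed
qed

end
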